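(* Let $\Omega\subseteq\mathbb{R}^3$ be a domain. If $b\colon\Omega\to\mathbb{R}$ is a real-valued biharmonic function (i.e. $\Delta_3^2 b=0$), then $\partial b\,\partial$ is inframonogenic and $\overline{\partial}\, b\,\overline{\partial}$ is antiinframonogenic. If $f=f_0+f_1e_1+f_2e_2\colon\Omega\to\mathbb{R}^3$ is inframonogenic or antiinframonogenic, then every component $f_i$ ($i=0,1,2$) of $f$ is biharmonic.
   Context: $\mathbb{H}$ denotes the real quaternions with basis $e_0=1,e_1,e_2,e_3$ and $e_1^2=e_2^2=e_3^2=e_1e_2e_3=-1$. $\mathbb{R}^3$ is identified with the reduced quaternions $x=x_0+x_1e_1+x_2e_2$. Write $\partial_i=\partial/\partial x_i$ and $\Delta_3=\partial_0^2+\partial_1^2+\partial_2^2$. For a (sufficiently differentiable) $\mathbb{H}$-valued function $f$, the left operators are $\overline{\partial} f=\partial_0 f+e_1\partial_1 f+e_2\partial_2 f$ and $\partial f=\partial_0 f-e_1\partial_1 f-e_2\partial_2 f$, and the right operators are $f\overline{\partial}=\partial_0 f+(\partial_1 f)e_1+(\partial_2 f)e_2$ and $f\partial=\partial_0 f-(\partial_1 f)e_1-(\partial_2 f)e_2$. The two-sided operators are $\overline{\partial} f\overline{\partial}:=\overline{\partial}(f\overline{\partial})=(\overline{\partial}f)\overline{\partial}$ and similarly $\partial f\partial$. A function $f$ is inframonogenic if $\overline{\partial} f\overline{\partial}=0$ and antiinframonogenic if $\partial f\partial=0$. A real function is biharmonic if $\Delta_3^2$ of it vanishes. *)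

theory Defs
  imports "HOL-Analysis.Analysis"
begin

datatype quat = Quat (qc0: real) (qc1: real) (qc2: real) (qc3: real)

definition qadd :: "quat \<Rightarrow> quat \<Rightarrow> quat" (infixl "\<oplus>\<^sub>H" 65) where
  "qadd p q = Quat (qc0 p + qc0 q) (qc1 p + qc1 q) (qc2 p + qc2 q) (qc3 p + qc3 q)"

text \<open>Hamilton product, with e1 e2 = e3, e2 e3 = e1, e3 e1 = e2, e_i^2 = -1
  (so that e1 e2 e3 = -1).\<close>
definition qmult :: "quat \<Rightarrow> quat \<Rightarrow> quat" (infixl "\<otimes>\<^sub>H" 70) where
  "qmult p q = Quat
     (qc0 p * qc0 q - qc1 p * qc1 q - qc2 p * qc2 q - qc3 p * qc3 q)
     (qc0 p * qc1 q + qc1 p * qc0 q + qc2 p * qc3 q - qc3 p * qc2 q)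
     (qc0 p * qc2 q - qc1 p * qc3 q + qc2 p * qc0 q + qc3 p * qc1 q)
     (qc0 p * qc3 q + qc1 p * qc2 q - qc2 p * qc1 q + qc3 p * qc0 q)"

definition qneg :: "quat \<Rightarrow> quat" where
  "qneg q = Quat (- qc0 q) (- qc1 q) (- qc2 q) (- qc3 q)"

definition qzero :: quat where "qzero = Quat 0 0 0 0"
definition qe1 :: quat where "qe1 = Quat 0 1 0 0"
definition qe2 :: quat where "qe2 = Quat 0 0 1 0"

definition qreal :: "real \<Rightarrow> quat" where "qreal r = Quat r 0 0 0"

type_synonym R3 = "real \<times> real \<times> real"

definition dir :: "nat \<Rightarrow> R3" where
  "dir i = (if i = 0 then (1, 0, 0) else if i = 1 then (0, 1, 0) else (0, 0, 1))"

definition pd :: "nat \<Rightarrow> (R3 \<Rightarrow> real) \<Rightarrow> R3 \<Rightarrow> real" where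
  "pd i g x = deriv (\<lambda>t. g (x + t *\<^sub>R dir i)) 0"

fun pds :: "nat list \<Rightarrow> (R3 \<Rightarrow> real) \<Rightarrow> R3 \<Rightarrow> real" where
  "pds [] g = g"
| "pds (i # is) g = pd i (pds is g)"

definition smooth_on :: "R3 set \<Rightarrow> (R3 \<Rightarrow> real) \<Rightarrow> bool" where
  "smooth_on \<Omega> g \<longleftrightarrow>
     (\<forall>is. (\<forall>i\<in>set is. i < 3) \<longrightarrow>
        continuous_on \<Omega> (pds is g) \<and>
        (\<forall>i<3. \<forall>x\<in>\<Omega>. (\<lambda>t. pds is g (x + t *\<^sub>R dir i)) differentiable (at 0)))"

definition laplace3 :: "(R3 \<Rightarrow> real) \<Rightarrow> R3 \<Rightarrow> real" where
  "laplace3 g x = pd 0 (pd 0 g) x + pd 1 (pd 1 g) x + pd 2 (pd 2 g) x"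

definition biharmonic_on :: "R3 set \<Rightarrow> (R3 \<Rightarrow> real) \<Rightarrow> bool" where
  "biharmonic_on \<Omega> g \<longleftrightarrow> (\<forall>x\<in>\<Omega>. laplace3 (laplace3 g) x = 0)"

definition qpd :: "nat \<Rightarrow> (R3 \<Rightarrow> quat) \<Rightarrow> R3 \<Rightarrow> quat" where
  "qpd i f x = Quat (pd i (\<lambda>y. qc0 (f y)) x) (pd i (\<lambda>y. qc1 (f y)) x)
                    (pd i (\<lambda>y. qc2 (f y)) x) (pd i (\<lambda>y. qc3 (f y)) x)"

definition qsmooth_on :: "R3 set \<Rightarrow> (R3 \<Rightarrow> quat) \<Rightarrow> bool" where
  "qsmooth_on \<Omega> f \<longleftrightarrow> smooth_on \<Omega> (\<lambda>y. qc0 (f y)) \<and> smooth_on \<Omega> (\<lambda>y. qc1 (f y))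
      \<and> smooth_on \<Omega> (\<lambda>y. qc2 (f y)) \<and> smooth_on \<Omega> (\<lambda>y. qc3 (f y))"

definition dbarL :: "(R3 \<Rightarrow> quat) \<Rightarrow> R3 \<Rightarrow> quat" where
  "dbarL f x = qpd 0 f x \<oplus>\<^sub>H qe1 \<otimes>\<^sub>H qpd 1 f x \<oplus>\<^sub>H qe2 \<otimes>\<^sub>H qpd 2 f x"

definition dL :: "(R3 \<Rightarrow> quat) \<Rightarrow> R3 \<Rightarrow> quat" where
  "dL f x = qpd 0 f x \<oplus>\<^sub>H qneg (qe1 \<otimes>\<^sub>H qpd 1 f x) \<oplus>\<^sub>H qneg (qe2 \<otimes>\<^sub>H qpd 2 f x)"

definition dbarR :: "(R3 \<Rightarrow> quat) \<Rightarrow> R3 \<Rightarrow> quat" where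
  "dbarR f x = qpd 0 f x \<oplus>\<^sub>H qpd 1 f x \<otimes>\<^sub>H qe1 \<oplus>\<^sub>H qpd 2 f x \<otimes>\<^sub>H qe2"

definition dR :: "(R3 \<Rightarrow> quat) \<Rightarrow> R3 \<Rightarrow> quat" where
  "dR f x = qpd 0 f x \<oplus>\<^sub>H qneg (qpd 1 f x \<otimes>\<^sub>H qe1) \<oplus>\<^sub>H qneg (qpd 2 f x \<otimes>\<^sub>H qe2)"

text \<open>Two-sided operators: dbar f dbar := dbar (f dbar), d f d := d (f d).\<close>
definition dbar2 :: "(R3 \<Rightarrow> quat) \<Rightarrow> R3 \<Rightarrow> quat" where
  "dbar2 f = dbarL (dbarR f)"

definition d2 :: "(R3 \<Rightarrow> quat) \<Rightarrow> R3 \<Rightarrow> quat" where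
  "d2 f = dL (dR f)"

definition inframonogenic_on :: "R3 set \<Rightarrow> (R3 \<Rightarrow> quat) \<Rightarrow> bool" where
  "inframonogenic_on \<Omega> f \<longleftrightarrow> (\<forall>x\<in>\<Omega>. dbar2 f x = qzero)"

definition antiinframonogenic_on :: "R3 set \<Rightarrow> (R3 \<Rightarrow> quat) \<Rightarrow> bool" where
  "antiinframonogenic_on \<Omega> f \<longleftrightarrow> (\<forall>x\<in>\<Omega>. d2 f x = qzero)"

end

theory Submission
  imports Defs
begin

text \<open>Multiplying out the quaternion products, dbarL (dL g), dL (dbarL g), dbarR (dR g) and
  dR (dbarR g) all equal the componentwise Laplacian of g, and dbarR (dL g) = dL (dbarR g),
  dR (dbarL g) = dbarL (dR g): cross terms such as e1 e2 \<partial>1 \<partial>2 g + e2 e1 \<partial>2 \<partial>1 g cancel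
  because mixed partial derivatives of a smooth function commute (Schwarz-Clairaut, obtained from
  the mean value theorem applied to mixed second differences). Commuting the two middle factors
  of dbarL (dbarR (dL (dR f))) and of dL (dR (dbarL (dbarR f))) turns both into the componentwise
  bilaplacian of f, which gives both directions at once.\<close>

lemma eventually_line_in_open:
  assumes "open \<Omega>" "x \<in> \<Omega>"
  shows "\<forall>\<^sub>F t in nhds 0. x + t *\<^sub>R dir i \<in> \<Omega>"
proof -
  obtain e where e: "e > 0" "ball x e \<subseteq> \<Omega>" using assms openE by blast
  have "x + t *\<^sub>R dir i \<in> \<Omega>" if "dist t 0 < e" for t :: real
  proof -
    have "norm (dir i) = 1" by (simp add: dir_def norm_Pair)
    then have "x + t *\<^sub>R dir i \<in> ball x e" using that by (simp add: dist_norm)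
    then show ?thesis using e(2) by blast
  qed
  then show ?thesis unfolding eventually_nhds_metric using e(1) by blast
qed

lemma pd_cong:
  assumes "open \<Omega>" "x \<in> \<Omega>" "\<And>y. y \<in> \<Omega> \<Longrightarrow> F y = G y"
  shows "pd i F x = pd i G x"
  unfolding pd_def
proof (rule deriv_cong_ev[OF _ refl])
  show "\<forall>\<^sub>F t in nhds 0. F (x + t *\<^sub>R dir i) = G (x + t *\<^sub>R dir i)"
    using eventually_line_in_open[OF assms(1,2), of i] by eventually_elim (simp add: assms(3))
qed

lemma differentiable_at_eventually_eq:
  fixes f g :: "real \<Rightarrow> real"
  assumes "f differentiable (at x)" "\<forall>\<^sub>F t in nhds x. f t = g t"
  shows "g differentiable (at x)"
proof -
  from assms(1) obtain D where "DERIV f x :> D" by (auto simp: real_differentiable_def)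
  then have "DERIV g x :> D" using DERIV_cong_ev[OF refl assms(2) refl] by simp
  then show ?thesis by (auto simp: real_differentiable_def)
qed

lemma has_real_derivative_pd_along_line:
  assumes "(\<lambda>s. H (y + s *\<^sub>R dir k)) differentiable (at 0)" "y = y0 + t0 *\<^sub>R dir k"
  shows "((\<lambda>t. H (y0 + t *\<^sub>R dir k)) has_real_derivative pd k H y) (at t0)"
proof -
  have "((\<lambda>s. H (y + s *\<^sub>R dir k)) has_real_derivative pd k H y) (at (t0 + - t0))"
    using assms(1) unfolding pd_def by (simp add: DERIV_deriv_iff_real_differentiable)
  then have "((\<lambda>t. H (y + (t + - t0) *\<^sub>R dir k)) has_real_derivative pd k H y) (at t0)"
    using DERIV_shift[of "\<lambda>s. H (y + s *\<^sub>R dir k)" "pd k H y" t0 "-t0"] by simp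
  moreover have "y + (t + - t0) *\<^sub>R dir k = y0 + t *\<^sub>R dir k" for t
    using assms(2) by (simp add: algebra_simps)
  ultimately show ?thesis by simp
qed

lemma pd_linear:
  assumes "(\<lambda>t. F (x + t *\<^sub>R dir i)) differentiable (at 0)"
    "(\<lambda>t. G (x + t *\<^sub>R dir i)) differentiable (at 0)"
  shows "pd i (\<lambda>y. a * F y + b * G y) x = a * pd i F x + b * pd i G x"
proof -
  have "((\<lambda>t. F (x + t *\<^sub>R dir i)) has_real_derivative pd i F x) (at 0)"
    "((\<lambda>t. G (x + t *\<^sub>R dir i)) has_real_derivative pd i G x) (at 0)"
    using assms unfolding pd_def by (simp_all add: DERIV_deriv_iff_real_differentiable)
  then have "((\<lambda>t. a * F (x + t *\<^sub>R dir i) + b * G (x + t *\<^sub>R dir i)) has_real_derivative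
      a * pd i F x + b * pd i G x) (at 0)"
    by (intro DERIV_add DERIV_cmult)
  then show ?thesis unfolding pd_def by (rule DERIV_imp_deriv)
qed

lemma pds_append: "pds (as @ bs) F = pds as (pds bs F)"
  by (induction as) auto

lemma smooth_on_pds:
  assumes "smooth_on \<Omega> F" "\<forall>i\<in>set js. i < 3"
  shows "smooth_on \<Omega> (pds js F)"
  unfolding smooth_on_def
proof (intro allI impI)
  fix "is" :: "nat list" assume "\<forall>i\<in>set is. i < 3"
  then have "\<forall>i\<in>set (is @ js). i < 3" using assms(2) by auto
  then show "continuous_on \<Omega> (pds is (pds js F)) \<and>
    (\<forall>i<3. \<forall>x\<in>\<Omega>. (\<lambda>t. pds is (pds js F) (x + t *\<^sub>R dir i)) differentiable (at 0))"
    using assms(1) unfolding smooth_on_def by (metis pds_append)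
qed

lemma smooth_on_pd: "smooth_on \<Omega> F \<Longrightarrow> i < 3 \<Longrightarrow> smooth_on \<Omega> (pd i F)"
  using smooth_on_pds[of \<Omega> F "[i]"] by simp

lemma smooth_on_imp_continuous_on: "smooth_on \<Omega> F \<Longrightarrow> continuous_on \<Omega> F"
  unfolding smooth_on_def by (drule spec[of _ "[]"]) simp

lemma smooth_on_imp_differentiable_along_line:
  "smooth_on \<Omega> F \<Longrightarrow> i < 3 \<Longrightarrow> x \<in> \<Omega> \<Longrightarrow> (\<lambda>t. F (x + t *\<^sub>R dir i)) differentiable (at 0)"
  unfolding smooth_on_def by (drule spec[of _ "[]"]) simp

lemma pds_linear:
  assumes "open \<Omega>" "smooth_on \<Omega> F" "smooth_on \<Omega> G" "\<forall>i\<in>set is. i < 3" "x \<in> \<Omega>"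
  shows "pds is (\<lambda>y. a * F y + b * G y) x = a * pds is F x + b * pds is G x"
  using assms(4,5)
proof (induction "is" arbitrary: x)
  case Nil then show ?case by simp
next
  case (Cons k "is")
  have "pds (k # is) (\<lambda>y. a * F y + b * G y) x = pd k (\<lambda>y. a * pds is F y + b * pds is G y) x"
    using Cons by (auto intro: pd_cong[OF assms(1)])
  also have "\<dots> = a * pd k (pds is F) x + b * pd k (pds is G) x"
    using Cons assms
    by (intro pd_linear smooth_on_imp_differentiable_along_line smooth_on_pds) auto
  finally show ?case by simp
qed

lemma smooth_on_linear:
  assumes "open \<Omega>" "smooth_on \<Omega> F" "smooth_on \<Omega> G"
  shows "smooth_on \<Omega> (\<lambda>y. a * F y + b * G y)"
  unfolding smooth_on_def
proof (intro allI impI conjI ballI)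
  fix "is" :: "nat list" assume is3: "\<forall>i\<in>set is. i < 3"
  have eq: "pds is (\<lambda>y. a * F y + b * G y) x = a * pds is F x + b * pds is G x" if "x \<in> \<Omega>" for x
    using pds_linear[OF assms is3 that] .
  have F: "smooth_on \<Omega> (pds is F)" and G: "smooth_on \<Omega> (pds is G)"
    using assms is3 by (simp_all add: smooth_on_pds)
  have "continuous_on \<Omega> (\<lambda>x. a * pds is F x + b * pds is G x)"
    using F G by (intro continuous_intros smooth_on_imp_continuous_on)
  then show "continuous_on \<Omega> (pds is (\<lambda>y. a * F y + b * G y))"
    by (rule continuous_on_eq) (simp add: eq)
  fix i :: nat and x assume i: "i < 3" and x: "x \<in> \<Omega>"
  have "(\<lambda>t. a * pds is F (x + t *\<^sub>R dir i) + b * pds is G (x + t *\<^sub>R dir i)) differentiable (at 0)"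
    using smooth_on_imp_differentiable_along_line[OF F i x]
      smooth_on_imp_differentiable_along_line[OF G i x]
    by (intro differentiable_add differentiable_mult differentiable_const)
  moreover have "\<forall>\<^sub>F t in nhds 0. a * pds is F (x + t *\<^sub>R dir i) + b * pds is G (x + t *\<^sub>R dir i)
      = pds is (\<lambda>y. a * F y + b * G y) (x + t *\<^sub>R dir i)"
    using eventually_line_in_open[OF assms(1) x, of i] by eventually_elim (simp add: eq)
  ultimately show "(\<lambda>t. pds is (\<lambda>y. a * F y + b * G y) (x + t *\<^sub>R dir i)) differentiable (at 0)"
    by (rule differentiable_at_eventually_eq)
qed

lemma smooth_on_add:
  "open \<Omega> \<Longrightarrow> smooth_on \<Omega> F \<Longrightarrow> smooth_on \<Omega> G \<Longrightarrow> smooth_on \<Omega> (\<lambda>y. F y + G y)"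
  using smooth_on_linear[of \<Omega> F G 1 1] by simp

lemma smooth_on_diff:
  "open \<Omega> \<Longrightarrow> smooth_on \<Omega> F \<Longrightarrow> smooth_on \<Omega> G \<Longrightarrow> smooth_on \<Omega> (\<lambda>y. F y - G y)"
  using smooth_on_linear[of \<Omega> F G 1 "-1"] by simp

lemma pd_add:
  "x \<in> \<Omega> \<Longrightarrow> smooth_on \<Omega> F \<Longrightarrow> smooth_on \<Omega> G \<Longrightarrow> i < 3 \<Longrightarrow>
    pd i (\<lambda>y. F y + G y) x = pd i F x + pd i G x"
  using pd_linear[of F x i G 1 1] smooth_on_imp_differentiable_along_line by simp

lemma pd_diff:
  "x \<in> \<Omega> \<Longrightarrow> smooth_on \<Omega> F \<Longrightarrow> smooth_on \<Omega> G \<Longrightarrow> i < 3 \<Longrightarrow>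
    pd i (\<lambda>y. F y - G y) x = pd i F x - pd i G x"
  using pd_linear[of F x i G 1 "-1"] smooth_on_imp_differentiable_along_line by simp

lemma dist_add_two_steps_le: "dist (x + s *\<^sub>R dir i + t *\<^sub>R dir j) x \<le> \<bar>s\<bar> + \<bar>t\<bar>"
proof -
  have "dist (x + s *\<^sub>R dir i + t *\<^sub>R dir j) x = norm (s *\<^sub>R dir i + t *\<^sub>R dir j)"
    by (simp add: dist_norm add.assoc)
  also have "\<dots> \<le> norm (s *\<^sub>R dir i) + norm (t *\<^sub>R dir j)" by (rule norm_triangle_ineq)
  also have "\<dots> = \<bar>s\<bar> + \<bar>t\<bar>" by (simp add: dir_def norm_Pair)
  finally show ?thesis .
qed

lemma mixed_difference_mean_value:
  assumes "smooth_on \<Omega> G" "i < 3" "j < 3" "ball x r \<subseteq> \<Omega>" "0 < h" "2 * h < r"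
  shows "\<exists>p. dist p x \<le> 2 * h \<and>
    G (x + h *\<^sub>R dir j + h *\<^sub>R dir i) - G (x + h *\<^sub>R dir i) - G (x + h *\<^sub>R dir j) + G x
      = h\<^sup>2 * pd j (pd i G) p"
proof -
  have in_\<Omega>: "x + s *\<^sub>R dir k + t *\<^sub>R dir l \<in> \<Omega>" if "\<bar>s\<bar> \<le> h" "\<bar>t\<bar> \<le> h" for s t k l
    using dist_add_two_steps_le[of x s k t l] that assms(4,6) by (auto simp: dist_commute)
  define \<phi> where "\<phi> s = G (x + h *\<^sub>R dir j + s *\<^sub>R dir i) - G (x + s *\<^sub>R dir i)" for s
  have "(\<phi> has_real_derivative pd i G (x + h *\<^sub>R dir j + s *\<^sub>R dir i) - pd i G (x + s *\<^sub>R dir i)) (at s)"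
    if "0 \<le> s" "s \<le> h" for s
    unfolding \<phi>_def[abs_def] using that in_\<Omega>[of s 0 i] in_\<Omega>[of h s j i] assms(5)
    by (intro DERIV_diff has_real_derivative_pd_along_line
        smooth_on_imp_differentiable_along_line[OF assms(1,2)]) auto
  then obtain \<xi> where \<xi>: "0 < \<xi>" "\<xi> < h"
    "\<phi> h - \<phi> 0 = h * (pd i G (x + h *\<^sub>R dir j + \<xi> *\<^sub>R dir i) - pd i G (x + \<xi> *\<^sub>R dir i))"
    using MVT2[OF assms(5), of \<phi>
        "\<lambda>s. pd i G (x + h *\<^sub>R dir j + s *\<^sub>R dir i) - pd i G (x + s *\<^sub>R dir i)"]
    by auto
  define \<psi> where "\<psi> t = pd i G (x + \<xi> *\<^sub>R dir i + t *\<^sub>R dir j)" for t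
  have "(\<psi> has_real_derivative pd j (pd i G) (x + \<xi> *\<^sub>R dir i + t *\<^sub>R dir j)) (at t)"
    if "0 \<le> t" "t \<le> h" for t
    unfolding \<psi>_def[abs_def] using that \<xi> in_\<Omega>[of \<xi> t i j] assms(1-3)
    by (intro has_real_derivative_pd_along_line smooth_on_imp_differentiable_along_line
        smooth_on_pd) auto
  then obtain \<eta> where \<eta>: "0 < \<eta>" "\<eta> < h"
    "\<psi> h - \<psi> 0 = h * pd j (pd i G) (x + \<xi> *\<^sub>R dir i + \<eta> *\<^sub>R dir j)"
    using MVT2[OF assms(5), of \<psi> "\<lambda>t. pd j (pd i G) (x + \<xi> *\<^sub>R dir i + t *\<^sub>R dir j)"]
    by auto
  have "\<psi> h = pd i G (x + h *\<^sub>R dir j + \<xi> *\<^sub>R dir i)"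
    by (simp add: \<psi>_def add_ac)
  then have "G (x + h *\<^sub>R dir j + h *\<^sub>R dir i) - G (x + h *\<^sub>R dir i) - G (x + h *\<^sub>R dir j) + G x
      = h * (\<psi> h - \<psi> 0)"
    using \<xi>(3) by (simp add: \<phi>_def \<psi>_def)
  also have "\<dots> = h\<^sup>2 * pd j (pd i G) (x + \<xi> *\<^sub>R dir i + \<eta> *\<^sub>R dir j)"
    using \<eta>(3) by (simp add: power2_eq_square)
  finally have "G (x + h *\<^sub>R dir j + h *\<^sub>R dir i) - G (x + h *\<^sub>R dir i) - G (x + h *\<^sub>R dir j) + G x
      = h\<^sup>2 * pd j (pd i G) (x + \<xi> *\<^sub>R dir i + \<eta> *\<^sub>R dir j)" .
  moreover have "dist (x + \<xi> *\<^sub>R dir i + \<eta> *\<^sub>R dir j) x \<le> 2 * h"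
    using dist_add_two_steps_le[of x \<xi> i \<eta> j] \<xi>(1,2) \<eta>(1,2) by simp
  ultimately show ?thesis by blast
qed

lemma pd_commute:
  assumes "open \<Omega>" "smooth_on \<Omega> G" "i < 3" "j < 3" "x \<in> \<Omega>"
  shows "pd j (pd i G) x = pd i (pd j G) x"
proof (rule ccontr)
  let ?A = "pd j (pd i G)" and ?B = "pd i (pd j G)"
  assume "?A x \<noteq> ?B x"
  define e where "e = \<bar>?A x - ?B x\<bar> / 2"
  have "e > 0" using \<open>?A x \<noteq> ?B x\<close> by (simp add: e_def)
  obtain r where r: "r > 0" "ball x r \<subseteq> \<Omega>" using assms(1,5) openE by blast
  have "continuous_on \<Omega> ?A" "continuous_on \<Omega> ?B"
    using assms(2-4) by (simp_all add: smooth_on_imp_continuous_on smooth_on_pd)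
  then obtain dA dB where "dA > 0" "dB > 0"
    and dA: "\<forall>y\<in>\<Omega>. dist y x < dA \<longrightarrow> dist (?A y) (?A x) < e"
    and dB: "\<forall>y\<in>\<Omega>. dist y x < dB \<longrightarrow> dist (?B y) (?B x) < e"
    using \<open>e > 0\<close> assms(5) unfolding continuous_on_iff by blast
  define h where "h = min r (min dA dB) / 4"
  have h: "h > 0" "2 * h < r" "2 * h < dA" "2 * h < dB"
    using r \<open>dA > 0\<close> \<open>dB > 0\<close> by (auto simp: h_def)
  obtain p where p: "dist p x \<le> 2 * h"
    "G (x + h *\<^sub>R dir j + h *\<^sub>R dir i) - G (x + h *\<^sub>R dir i) - G (x + h *\<^sub>R dir j) + G x
      = h\<^sup>2 * ?A p"
    using mixed_difference_mean_value[OF assms(2,3,4) r(2) h(1,2)] by blast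
  obtain q where q: "dist q x \<le> 2 * h"
    "G (x + h *\<^sub>R dir i + h *\<^sub>R dir j) - G (x + h *\<^sub>R dir j) - G (x + h *\<^sub>R dir i) + G x
      = h\<^sup>2 * ?B q"
    using mixed_difference_mean_value[OF assms(2,4,3) r(2) h(1,2)] by blast
  have swap: "x + h *\<^sub>R dir i + h *\<^sub>R dir j = x + h *\<^sub>R dir j + h *\<^sub>R dir i"
    by (simp add: add_ac)
  have "h\<^sup>2 * ?A p = h\<^sup>2 * ?B q"
    using p(2) q(2)[unfolded swap] by linarith
  then have "?A p = ?B q" using h(1) by simp
  moreover have "p \<in> \<Omega>" "q \<in> \<Omega>"
    using p q h(2) r(2) by (auto simp: dist_commute)
  then have "\<bar>?A p - ?A x\<bar> < e" "\<bar>?B q - ?B x\<bar> < e"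
    using dA dB p q h(3,4) by (auto simp: dist_real_def)
  ultimately show False unfolding e_def by (auto simp: abs_if split: if_splits)
qed

lemma pd_const: "pd i (\<lambda>y. c) = (\<lambda>y. 0)"
  unfolding pd_def by (intro ext DERIV_imp_deriv) simp

lemma pds_zero: "pds is (\<lambda>y. 0) = (\<lambda>y. 0)"
  by (induction "is") (simp_all add: pd_const)

lemma smooth_on_zero: "smooth_on \<Omega> (\<lambda>y. 0)"
  by (simp add: smooth_on_def pds_zero)

definition qlaplace3 :: "(R3 \<Rightarrow> quat) \<Rightarrow> R3 \<Rightarrow> quat" where
  "qlaplace3 f x = Quat (laplace3 (\<lambda>y. qc0 (f y)) x) (laplace3 (\<lambda>y. qc1 (f y)) x)
                        (laplace3 (\<lambda>y. qc2 (f y)) x) (laplace3 (\<lambda>y. qc3 (f y)) x)"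

lemma qpd_cong:
  assumes "open \<Omega>" "x \<in> \<Omega>" "\<And>y. y \<in> \<Omega> \<Longrightarrow> F y = G y"
  shows "qpd i F x = qpd i G x"
proof -
  have "pd i (\<lambda>y. g (F y)) x = pd i (\<lambda>y. g (G y)) x" for g
    using assms by (intro pd_cong[OF assms(1,2)]) simp
  then show ?thesis unfolding qpd_def by simp
qed

lemma
  assumes "open \<Omega>" "x \<in> \<Omega>" "\<And>y. y \<in> \<Omega> \<Longrightarrow> F y = G y"
  shows dL_cong: "dL F x = dL G x"
    and dR_cong: "dR F x = dR G x"
    and dbarL_cong: "dbarL F x = dbarL G x"
    and dbarR_cong: "dbarR F x = dbarR G x"
  using qpd_cong[OF assms] by (simp_all add: dL_def dR_def dbarL_def dbarR_def)

lemma qlaplace3_cong: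
  assumes "open \<Omega>" "x \<in> \<Omega>" "\<And>y. y \<in> \<Omega> \<Longrightarrow> F y = G y"
  shows "qlaplace3 F x = qlaplace3 G x"
proof -
  have "pd i (pd i (\<lambda>y. g (F y))) x = pd i (pd i (\<lambda>y. g (G y))) x" for i g
    using assms by (intro pd_cong[OF assms(1,2)]) (auto intro: pd_cong[OF assms(1)])
  then show ?thesis by (simp add: qlaplace3_def laplace3_def)
qed

lemma d2_cong:
  "open \<Omega> \<Longrightarrow> x \<in> \<Omega> \<Longrightarrow> (\<And>y. y \<in> \<Omega> \<Longrightarrow> F y = G y) \<Longrightarrow> d2 F x = d2 G x"
  unfolding d2_def by (rule dL_cong) (auto intro: dR_cong)

lemma dbar2_cong:
  "open \<Omega> \<Longrightarrow> x \<in> \<Omega> \<Longrightarrow> (\<And>y. y \<in> \<Omega> \<Longrightarrow> F y = G y) \<Longrightarrow> dbar2 F x = dbar2 G x"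
  unfolding dbar2_def by (rule dbarL_cong) (auto intro: dbarR_cong)

lemma d2_qzero: "d2 (\<lambda>y. qzero) x = qzero"
  by (simp add: d2_def dL_def dR_def qpd_def qadd_def qmult_def qneg_def qzero_def pd_const)

lemma dbar2_qzero: "dbar2 (\<lambda>y. qzero) x = qzero"
  by (simp add: dbar2_def dbarL_def dbarR_def qpd_def qadd_def qmult_def qzero_def pd_const)

lemmas pd_commute_ordered =
  pd_commute[where i = 1 and j = 0, unfolded One_nat_def]
  pd_commute[where i = 2 and j = 0]
  pd_commute[where i = 2 and j = 1, unfolded One_nat_def]

lemmas quat_operators_expand =
  dbarL_def dL_def dbarR_def dR_def qlaplace3_def laplace3_def qsmooth_on_def
  qpd_def qadd_def qmult_def qneg_def qe1_def qe2_def
  pd_add pd_diff smooth_on_pd smooth_on_add smooth_on_diff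
  pd_commute_ordered

lemma qsmooth_on_dR: "open \<Omega> \<Longrightarrow> qsmooth_on \<Omega> f \<Longrightarrow> qsmooth_on \<Omega> (dR f)"
  by (simp add: quat_operators_expand)

lemma qsmooth_on_dbarR: "open \<Omega> \<Longrightarrow> qsmooth_on \<Omega> f \<Longrightarrow> qsmooth_on \<Omega> (dbarR f)"
  by (simp add: quat_operators_expand)

lemma
  assumes "open \<Omega>" "qsmooth_on \<Omega> f" "x \<in> \<Omega>"
  shows dbarL_dL_eq_qlaplace3: "dbarL (dL f) x = qlaplace3 f x"
    and dL_dbarL_eq_qlaplace3: "dL (dbarL f) x = qlaplace3 f x"
    and dbarR_dR_eq_qlaplace3: "dbarR (dR f) x = qlaplace3 f x"
    and dR_dbarR_eq_qlaplace3: "dR (dbarR f) x = qlaplace3 f x"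
  using assms by (simp_all add: quat_operators_expand)

lemma
  assumes "open \<Omega>" "qsmooth_on \<Omega> f" "x \<in> \<Omega>"
  shows dbarR_dL_commute: "dbarR (dL f) x = dL (dbarR f) x"
    and dR_dbarL_commute: "dR (dbarL f) x = dbarL (dR f) x"
  using assms by (simp_all add: quat_operators_expand)

lemma dbar2_d2_eq_qlaplace3_qlaplace3:
  assumes "open \<Omega>" "qsmooth_on \<Omega> f" "x \<in> \<Omega>"
  shows "dbar2 (d2 f) x = qlaplace3 (qlaplace3 f) x"
proof -
  have "dbar2 (d2 f) x = dbarL (dbarR (dL (dR f))) x"
    by (simp add: dbar2_def d2_def)
  also have "\<dots> = dbarL (dL (dbarR (dR f))) x"
    using assms by (intro dbarL_cong dbarR_dL_commute qsmooth_on_dR) auto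
  also have "\<dots> = qlaplace3 (dbarR (dR f)) x"
    using assms by (intro dbarL_dL_eq_qlaplace3 qsmooth_on_dbarR qsmooth_on_dR)
  also have "\<dots> = qlaplace3 (qlaplace3 f) x"
    using assms by (intro qlaplace3_cong dbarR_dR_eq_qlaplace3) auto
  finally show ?thesis .
qed

lemma d2_dbar2_eq_qlaplace3_qlaplace3:
  assumes "open \<Omega>" "qsmooth_on \<Omega> f" "x \<in> \<Omega>"
  shows "d2 (dbar2 f) x = qlaplace3 (qlaplace3 f) x"
proof -
  have "d2 (dbar2 f) x = dL (dR (dbarL (dbarR f))) x"
    by (simp add: dbar2_def d2_def)
  also have "\<dots> = dL (dbarL (dR (dbarR f))) x"
    using assms by (intro dL_cong dR_dbarL_commute qsmooth_on_dbarR) auto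
  also have "\<dots> = qlaplace3 (dR (dbarR f)) x"
    using assms by (intro dL_dbarL_eq_qlaplace3 qsmooth_on_dR qsmooth_on_dbarR)
  also have "\<dots> = qlaplace3 (qlaplace3 f) x"
    using assms by (intro qlaplace3_cong dR_dbarR_eq_qlaplace3) auto
  finally show ?thesis .
qed

lemma laplace3_zero: "laplace3 (\<lambda>y. 0) = (\<lambda>y. 0)"
  by (simp add: laplace3_def[abs_def] pd_const)

lemma qlaplace3_qlaplace3_qreal:
  "qlaplace3 (qlaplace3 (\<lambda>y. qreal (b y))) x = qreal (laplace3 (laplace3 b) x)"
  by (simp add: qlaplace3_def qreal_def laplace3_zero)

lemma qlaplace3_qlaplace3_eq_qzero_iff:
  "qlaplace3 (qlaplace3 f) x = qzero \<longleftrightarrow>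
    laplace3 (laplace3 (\<lambda>y. qc0 (f y))) x = 0 \<and> laplace3 (laplace3 (\<lambda>y. qc1 (f y))) x = 0 \<and>
    laplace3 (laplace3 (\<lambda>y. qc2 (f y))) x = 0 \<and> laplace3 (laplace3 (\<lambda>y. qc3 (f y))) x = 0"
  by (simp add: qlaplace3_def qzero_def)

lemma real_biharmonic_two_sided_operators:
  assumes "open \<Omega>" "smooth_on \<Omega> b" "biharmonic_on \<Omega> b"
  shows "inframonogenic_on \<Omega> (d2 (\<lambda>x. qreal (b x)))"
    and "antiinframonogenic_on \<Omega> (dbar2 (\<lambda>x. qreal (b x)))"
proof -
  have "qsmooth_on \<Omega> (\<lambda>x. qreal (b x))"
    using assms(2) by (simp add: qsmooth_on_def qreal_def smooth_on_zero)
  then have "dbar2 (d2 (\<lambda>x. qreal (b x))) x = qreal 0 \<and> d2 (dbar2 (\<lambda>x. qreal (b x))) x = qreal 0"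
    if "x \<in> \<Omega>" for x
    using assms that by (simp add: dbar2_d2_eq_qlaplace3_qlaplace3 d2_dbar2_eq_qlaplace3_qlaplace3
        qlaplace3_qlaplace3_qreal biharmonic_on_def)
  then show "inframonogenic_on \<Omega> (d2 (\<lambda>x. qreal (b x)))"
    and "antiinframonogenic_on \<Omega> (dbar2 (\<lambda>x. qreal (b x)))"
    by (simp_all add: inframonogenic_on_def antiinframonogenic_on_def qreal_def qzero_def)
qed

lemma qlaplace3_qlaplace3_eq_qzero_if_inframonogenic:
  assumes "open \<Omega>" "qsmooth_on \<Omega> f" "inframonogenic_on \<Omega> f \<or> antiinframonogenic_on \<Omega> f"
    "x \<in> \<Omega>"
  shows "qlaplace3 (qlaplace3 f) x = qzero"
  using assms(3)
proof
  assume "inframonogenic_on \<Omega> f"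
  then have "d2 (dbar2 f) x = d2 (\<lambda>y. qzero) x"
    using assms by (intro d2_cong) (auto simp: inframonogenic_on_def)
  then show ?thesis
    using assms by (simp add: d2_dbar2_eq_qlaplace3_qlaplace3 d2_qzero)
next
  assume "antiinframonogenic_on \<Omega> f"
  then have "dbar2 (d2 f) x = dbar2 (\<lambda>y. qzero) x"
    using assms by (intro dbar2_cong) (auto simp: antiinframonogenic_on_def)
  then show ?thesis
    using assms by (simp add: dbar2_d2_eq_qlaplace3_qlaplace3 dbar2_qzero)
qed

theorem proposition2p2:
  fixes \<Omega> :: "R3 set"
  assumes dom: "open \<Omega>" "connected \<Omega>" "\<Omega> \<noteq> {}"
  shows "(\<forall>b :: R3 \<Rightarrow> real. smooth_on \<Omega> b \<and> biharmonic_on \<Omega> b \<longrightarrow>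
            inframonogenic_on \<Omega> (d2 (\<lambda>x. qreal (b x))) \<and>
            antiinframonogenic_on \<Omega> (dbar2 (\<lambda>x. qreal (b x))))
       \<and> (\<forall>f :: R3 \<Rightarrow> quat. qsmooth_on \<Omega> f \<and> (\<forall>x\<in>\<Omega>. qc3 (f x) = 0) \<and>
            (inframonogenic_on \<Omega> f \<or> antiinframonogenic_on \<Omega> f) \<longrightarrow>
            biharmonic_on \<Omega> (\<lambda>x. qc0 (f x)) \<and> biharmonic_on \<Omega> (\<lambda>x. qc1 (f x)) \<and>
            biharmonic_on \<Omega> (\<lambda>x. qc2 (f x)))"
proof (intro conjI allI impI)
  fix b :: "R3 \<Rightarrow> real"
  assume "smooth_on \<Omega> b \<and> biharmonic_on \<Omega> b"
  then show "inframonogenic_on \<Omega> (d2 (\<lambda>x. qreal (b x)))"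
    and "antiinframonogenic_on \<Omega> (dbar2 (\<lambda>x. qreal (b x)))"
    using real_biharmonic_two_sided_operators dom(1) by blast+
next
  fix f :: "R3 \<Rightarrow> quat"
  assume "qsmooth_on \<Omega> f \<and> (\<forall>x\<in>\<Omega>. qc3 (f x) = 0) \<and>
    (inframonogenic_on \<Omega> f \<or> antiinframonogenic_on \<Omega> f)"
  then have "qlaplace3 (qlaplace3 f) x = qzero" if "x \<in> \<Omega>" for x
    using qlaplace3_qlaplace3_eq_qzero_if_inframonogenic dom(1) that by blast
  then show "biharmonic_on \<Omega> (\<lambda>x. qc0 (f x))" "biharmonic_on \<Omega> (\<lambda>x. qc1 (f x))"
    "biharmonic_on \<Omega> (\<lambda>x. qc2 (f x))"
    by (simp_all add: biharmonic_on_def qlaplace3_qlaplace3_eq_qzero_iff)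
qed

end
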